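(* Suppose the sequence $\{\mathcal{G}[k]\}_{k\ge0}$ satisfies the joint strong-connectivity assumption with parameter $T$. Then for every substate $j\in\{1,\dots,N\}$, under the freshness-index rules, $\tau^{(j)}_i[k]\neq\omega$ for all $k\ge (N-1)T$ and all $i\in\mathcal{V}$.
   Context: Graphs. Nodes $\mathcal{V}=\{1,\dots,N\}$. At each time $k\in\mathbb{N}=\{0,1,2,\dots\}$ there is a directed graph $\mathcal{G}[k]=(\mathcal{V},\mathcal{E}[k])$; $(i,j)\in\mathcal{E}[k]$ means node $i$ can send information to node $j$ at time $k$. $\mathcal{N}_i[k]=\{l\neq i:(l,i)\in\mathcal{E}[k]\}$ is the set of neighbors of $i$ at time $k$. The union graph over an interval of times has vertex set $\mathcal{V}$ and edge set the union of the edge sets over that interval. Joint strong-connectivity assumption: there is $T\in\mathbb{N}_+=\{1,2,\dots\}$ such that for every $k\in\mathbb{N}$ the union graph over $[kT,(k+1)T)$ is strongly connected. Freshness indices. For each substate index $j\in\{1,\dots,N\}$ (node $j$ being the source node of substate $j$) and node $i$, node $i$ keeps $\tau^{(j)}_i[k]\in\{\omega\}\cup\mathbb{N}$, where $\omega$ is a special symbol. Initialization: $\tau^{(j)}_j[0]=0$, $\tau^{(j)}_i[0]=\omega$ for $i\neq j$. The source keeps $\tau^{(j)}_j[k]=0$ for all $k$. For $i\neq j$, let $\mathcal{M}^{(j)}_i[k]=\{l\in\mathcal{N}_i[k]:\tau^{(j)}_l[k]\neq\omega\}$. Case 1, $\tau^{(j)}_i[k]=\omega$: if $\mathcal{M}^{(j)}_i[k]\neq\emptyset$,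 let $u$ be any minimizer of $\tau^{(j)}_l[k]$ over $l\in\mathcal{M}^{(j)}_i[k]$ and set $\tau^{(j)}_i[k+1]=\tau^{(j)}_u[k]+1$; otherwise set $\tau^{(j)}_i[k+1]=\omega$. Case 2, $\tau^{(j)}_i[k]\neq\omega$: let $\mathcal{F}^{(j)}_i[k]=\{l\in\mathcal{M}^{(j)}_i[k]:\tau^{(j)}_l[k]<\tau^{(j)}_i[k]\}$; if nonempty, let $u$ be any minimizer of $\tau^{(j)}_l[k]$ over $\mathcal{F}^{(j)}_i[k]$ and set $\tau^{(j)}_i[k+1]=\tau^{(j)}_u[k]+1$; otherwise set $\tau^{(j)}_i[k+1]=\tau^{(j)}_i[k]+1$. *)

theory Defs
  imports Main
begin

text \<open>A time-varying directed graph is a map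
  E :: nat \<Rightarrow> (nat \<times> nat) set; (i,l) \<in> E k means node i can send to node l at time k.
  The special symbol omega is represented by None; a value t \<in> \<nat> by Some t.
  tau i k is the freshness index of node i at time k (for one fixed substate j).\<close>

definition nodes :: "nat \<Rightarrow> nat set" where
  "nodes N = {1..N}"

definition nbrs :: "(nat \<Rightarrow> (nat \<times> nat) set) \<Rightarrow> nat \<Rightarrow> nat \<Rightarrow> nat set" where
  "nbrs E i k = {l. l \<noteq> i \<and> (l, i) \<in> E k}"

definition union_edges :: "(nat \<Rightarrow> (nat \<times> nat) set) \<Rightarrow> nat \<Rightarrow> nat \<Rightarrow> (nat \<times> nat) set" where
  "union_edges E a b = (\<Union>k\<in>{a..<b}. E k)"

definition strongly_connected :: "nat set \<Rightarrow> (nat \<times> nat) set \<Rightarrow> bool" where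
  "strongly_connected V R \<longleftrightarrow> (\<forall>a\<in>V. \<forall>b\<in>V. (a, b) \<in> R\<^sup>*)"

definition graph_seq :: "nat \<Rightarrow> (nat \<Rightarrow> (nat \<times> nat) set) \<Rightarrow> bool" where
  "graph_seq N E \<longleftrightarrow> (\<forall>k. E k \<subseteq> nodes N \<times> nodes N)"

definition joint_strong_conn :: "nat \<Rightarrow> (nat \<Rightarrow> (nat \<times> nat) set) \<Rightarrow> nat \<Rightarrow> bool" where
  "joint_strong_conn N E T \<longleftrightarrow> T \<ge> 1 \<and>
     (\<forall>k. strongly_connected (nodes N) (union_edges E (k * T) ((k + 1) * T)))"

definition fresh_step :: "(nat \<Rightarrow> (nat \<times> nat) set) \<Rightarrow> (nat \<Rightarrow> nat \<Rightarrow> nat option) \<Rightarrow> nat \<Rightarrow> nat \<Rightarrow> bool" where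
  "fresh_step E tau i k \<longleftrightarrow>
     (let M = {l \<in> nbrs E i k. tau l k \<noteq> None} in
      case tau i k of
        None \<Rightarrow>
          (if M \<noteq> {} then
             (\<exists>u\<in>M. (\<forall>l\<in>M. the (tau u k) \<le> the (tau l k)) \<and> tau i (Suc k) = Some (the (tau u k) + 1))
           else tau i (Suc k) = None)
      | Some t \<Rightarrow>
          (let F = {l \<in> M. the (tau l k) < t} in
           if F \<noteq> {} then
             (\<exists>u\<in>F. (\<forall>l\<in>F. the (tau u k) \<le> the (tau l k)) \<and> tau i (Suc k) = Some (the (tau u k) + 1))
           else tau i (Suc k) = Some (t + 1)))"

definition fresh_rules :: "nat \<Rightarrow> (nat \<Rightarrow> (nat \<times> nat) set) \<Rightarrow> nat \<Rightarrow> (nat \<Rightarrow> nat \<Rightarrow> nat option) \<Rightarrow> bool" where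
  "fresh_rules N E j tau \<longleftrightarrow>
     (\<forall>i\<in>nodes N. i \<noteq> j \<longrightarrow> tau i 0 = None) \<and>
     (\<forall>k. tau j k = Some 0) \<and>
     (\<forall>k. \<forall>i\<in>nodes N. i \<noteq> j \<longrightarrow> fresh_step E tau i k)"

end

theory Submission
  imports Defs
begin

text \<open>Once a node holds a value it keeps one, since the update rule of an informed node always
  writes some value. Hence the set of informed nodes is monotone in time, and by strong
  connectivity of each window \<open>[mT, (m+1)T)\<close> some edge of that window leads from an informed to an
  uninformed node, so every window informs at least one new node until all \<open>N\<close> nodes are
  informed. Starting from the source alone, \<open>N - 1\<close> windows suffice.\<close>

definition informed :: "nat \<Rightarrow> (nat \<Rightarrow> nat \<Rightarrow> nat option) \<Rightarrow> nat \<Rightarrow> nat set" where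
  "informed N tau k = {i \<in> nodes N. tau i k \<noteq> None}"

lemma fresh_rules_keeps_value:
  assumes "fresh_rules N E j tau" "i \<in> nodes N" "tau i k \<noteq> None"
  shows "tau i (Suc k) \<noteq> None"
proof (cases "i = j")
  case True
  then show ?thesis using assms by (simp add: fresh_rules_def)
next
  case False
  then have "fresh_step E tau i k" using assms by (simp add: fresh_rules_def)
  then show ?thesis using assms(3)
    unfolding fresh_step_def Let_def by (auto split: option.splits if_splits)
qed

lemma fresh_rules_receives_value:
  assumes "fresh_rules N E j tau" "i \<in> nodes N" "l \<noteq> i" "(l, i) \<in> E k" "tau l k \<noteq> None"
  shows "tau i (Suc k) \<noteq> None"
proof (cases "tau i k = None \<and> i \<noteq> j")
  case True
  then have "fresh_step E tau i k" using assms by (simp add: fresh_rules_def)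
  moreover have "{l \<in> nbrs E i k. tau l k \<noteq> None} \<noteq> {}" using assms by (auto simp: nbrs_def)
  ultimately show ?thesis using True unfolding fresh_step_def Let_def by auto
next
  case False
  then show ?thesis
    using fresh_rules_keeps_value[OF assms(1,2)] assms(1) by (auto simp: fresh_rules_def)
qed

lemma informed_mono:
  assumes "fresh_rules N E j tau" "k \<le> k'"
  shows "informed N tau k \<subseteq> informed N tau k'"
  using assms(2)
proof (induction k' rule: dec_induct)
  case (step n)
  then show ?case
    using fresh_rules_keeps_value[OF assms(1)] unfolding informed_def by blast
qed simp

lemma source_informed:
  assumes "fresh_rules N E j tau" "j \<in> nodes N"
  shows "j \<in> informed N tau k"
  using assms by (simp add: fresh_rules_def informed_def)

lemma rtrancl_leaves_set:
  assumes "(a, b) \<in> R\<^sup>*" "a \<in> S" "b \<notin> S"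
  obtains x y where "(x, y) \<in> R" "x \<in> S" "y \<notin> S"
  using assms by (induction rule: rtrancl_induct) blast+

lemma informed_grows_over_connected_window:
  assumes "graph_seq N E" "fresh_rules N E j tau" "j \<in> nodes N"
    and conn: "strongly_connected (nodes N) (union_edges E a b)"
  shows "informed N tau a = nodes N \<or> informed N tau a \<subset> informed N tau b"
proof (cases "informed N tau a = nodes N")
  case False
  then obtain c where c: "c \<in> nodes N" "c \<notin> informed N tau a"
    unfolding informed_def by blast
  have "(j, c) \<in> (union_edges E a b)\<^sup>*"
    using conn assms(3) c(1) unfolding strongly_connected_def by blast
  then obtain x y where xy: "(x, y) \<in> union_edges E a b"
    "x \<in> informed N tau a" "y \<notin> informed N tau a"
    using rtrancl_leaves_set source_informed[OF assms(2,3)] c(2) by metis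
  then obtain k where k: "a \<le> k" "k < b" "(x, y) \<in> E k"
    unfolding union_edges_def by auto
  have y: "y \<in> nodes N" using assms(1) k(3) unfolding graph_seq_def by blast
  have "x \<in> informed N tau k" using informed_mono[OF assms(2) k(1)] xy(2) by blast
  then have "y \<in> informed N tau (Suc k)"
    using fresh_rules_receives_value[OF assms(2) y _ k(3)] xy(2,3) y
    unfolding informed_def by blast
  then have "y \<in> informed N tau b" using informed_mono[OF assms(2), of "Suc k" b] k(2) by auto
  then show ?thesis using xy(3) informed_mono[OF assms(2), of a b] k by auto
qed simp

lemma card_informed_after_windows:
  assumes "graph_seq N E" "joint_strong_conn N E T" "fresh_rules N E j tau" "j \<in> nodes N"
  shows "min N (Suc m) \<le> card (informed N tau (m * T))"
proof (induction m)
  case 0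
  have "informed N tau 0 \<noteq> {}" using source_informed[OF assms(3,4)] by blast
  moreover have "finite (informed N tau 0)" by (simp add: informed_def nodes_def)
  ultimately show ?case by (simp add: card_gt_0_iff Suc_le_eq min_le_iff_disj)
next
  case (Suc m)
  have "strongly_connected (nodes N) (union_edges E (m * T) (Suc m * T))"
    using assms(2) by (simp add: joint_strong_conn_def)
  then consider "informed N tau (m * T) = nodes N"
    | "informed N tau (m * T) \<subset> informed N tau (Suc m * T)"
    using informed_grows_over_connected_window[OF assms(1,3,4)] by blast
  then show ?case
  proof cases
    case 1
    have "informed N tau (m * T) \<subseteq> informed N tau (Suc m * T)"
      using informed_mono[OF assms(3)] by simp
    then have "informed N tau (Suc m * T) = nodes N"
      using 1 unfolding informed_def by blast
    then show ?thesis by (simp add: nodes_def)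
  next
    case 2
    then have "card (informed N tau (m * T)) < card (informed N tau (Suc m * T))"
      by (intro psubset_card_mono) (simp_all add: informed_def nodes_def)
    then show ?thesis using Suc.IH by simp
  qed
qed

theorem lemma3:
  fixes N T j :: nat and E :: "nat \<Rightarrow> (nat \<times> nat) set" and tau :: "nat \<Rightarrow> nat \<Rightarrow> nat option"
  assumes "graph_seq N E"
    and "joint_strong_conn N E T"
    and "j \<in> nodes N"
    and "fresh_rules N E j tau"
  shows "\<forall>k \<ge> (N - 1) * T. \<forall>i \<in> nodes N. tau i k \<noteq> None"
proof -
  have "N \<ge> 1" using assms(3) by (simp add: nodes_def)
  then have "N \<le> card (informed N tau ((N - 1) * T))"
    using card_informed_after_windows[OF assms(1,2,4,3), of "N - 1"] by simp
  moreover have "informed N tau ((N - 1) * T) \<subseteq> nodes N" by (auto simp: informed_def)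
  ultimately have full: "informed N tau ((N - 1) * T) = nodes N"
    by (metis card_seteq finite_atLeastAtMost card_atLeastAtMost diff_Suc_1 nodes_def)
  show ?thesis
  proof (intro allI impI ballI)
    fix k i assume "(N - 1) * T \<le> k" "i \<in> nodes N"
    then have "i \<in> informed N tau k" using full informed_mono[OF assms(4)] by blast
    then show "tau i k \<noteq> None" by (simp add: informed_def)
  qed
qed

end
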